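(* Let $A=(A_1,\dots,A_n)\in\mathbb{Z}^{d\times n}$ have rank $d$. The Basic Generalized Euclidean Algorithm (described in the context) terminates on input $A$, and the matrix $B$ it returns is a basis of $\mathcal{L}(A)$, i.e. $B\in\mathbb{Z}^{d\times d}$ and $\mathcal{L}(B)=\mathcal{L}(A)$.
   Context: For a matrix $M$ with columns $M_1,\dots,M_m$, $\mathcal{L}(M)=\{\sum_i\lambda_iM_i:\lambda\in\mathbb{Z}^m\}$. For real $y$, $\lfloor y\rceil:=\lfloor y+1/2\rfloor$ is the nearest integer. Basic Generalized Euclidean Algorithm. Input: $A=(A_1,\dots,A_n)\in\mathbb{Z}^{d\times n}$ of rank $d$. 1. Choose $d$ linearly independent columns of $A$ and let $B=(B_1,\dots,B_d)$ be the matrix they form. Let $C$ be the multiset of the remaining $n-d$ columns. 2. While $C\neq\emptyset$: - choose any $c\in C$ and compute $x\in\mathbb{Q}^d$ with $Bx=c$; - if $x\in\mathbb{Z}^d$, remove $c$ from $C$; - otherwise choose an index $\ell$ with $x_\ell\notin\mathbb{Z}$, remove $c$ from $C$, add the current column $B_\ell$ to $C$, and replace the column $B_\ell$ by $c-\bigl(B_\ell\lfloor x_\ell\rceil+\sum_{j\neq\ell}B_j\lfloor x_j\rfloor\bigr)$. 3. Return $B$. *)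

theory Defs
  imports "HOL-Analysis.Analysis" "HOL-Library.Multiset"
begin

text \<open>Integer vectors of dimension d are int^'d; the dimension d is CARD('d).
  The input matrix A has columns A 0, ..., A (n-1).\<close>

definition rv :: "int ^ 'd \<Rightarrow> real ^ 'd" where
  "rv v = (\<chi> i. real_of_int (v $ i))"

definition round_near :: "real \<Rightarrow> int" where
  "round_near y = \<lfloor>y + 1/2\<rfloor>"

definition lattice_cols :: "(nat \<Rightarrow> int ^ 'd) \<Rightarrow> nat \<Rightarrow> (int ^ 'd) set" where
  "lattice_cols A n = {v. \<exists>lam::nat \<Rightarrow> int. v = (\<Sum>i<n. lam i *s A i)}"

definition lattice_basis :: "('d::finite \<Rightarrow> int ^ 'd) \<Rightarrow> (int ^ 'd) set" where
  "lattice_basis B = {v. \<exists>lam::'d \<Rightarrow> int. v = (\<Sum>j\<in>UNIV. lam j *s B j)}"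

text \<open>Rank of the d x n matrix A equals d (column rank over the reals = rationals).\<close>
definition full_rank :: "(nat \<Rightarrow> int ^ 'd::finite) \<Rightarrow> nat \<Rightarrow> bool" where
  "full_rank A n \<longleftrightarrow> dim ((\<lambda>i. rv (A i)) ` {..<n}) = CARD('d)"

type_synonym 'd gea_state = "('d \<Rightarrow> int ^ 'd) \<times> (int ^ 'd) multiset"

text \<open>Step 1: B consists of d linearly independent columns (distinct column indices),
  C is the multiset of the remaining n - d columns.\<close>
definition gea_init :: "(nat \<Rightarrow> int ^ 'd::finite) \<Rightarrow> nat \<Rightarrow> 'd gea_state \<Rightarrow> bool" where
  "gea_init A n s \<longleftrightarrow> (\<exists>\<sigma>::'d \<Rightarrow> nat.
      inj \<sigma> \<and> (\<forall>j. \<sigma> j < n) \<and>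
      inj (\<lambda>j. rv (A (\<sigma> j))) \<and> independent (range (\<lambda>j. rv (A (\<sigma> j)))) \<and>
      s = ((\<lambda>j. A (\<sigma> j)), mset (map A (filter (\<lambda>i. i \<notin> range \<sigma>) [0..<n]))))"

text \<open>One iteration of the while loop (all nondeterministic choices allowed).\<close>
definition gea_step :: "'d::finite gea_state \<Rightarrow> 'd gea_state \<Rightarrow> bool" where
  "gea_step s s' \<longleftrightarrow> (case s of (B, C) \<Rightarrow>
     \<exists>c. c \<in># C \<and> (\<exists>x :: real ^ 'd.
        (\<forall>j. x $ j \<in> \<rat>) \<and> (\<Sum>j\<in>UNIV. x $ j *\<^sub>R rv (B j)) = rv c \<and>
        (((\<forall>j. x $ j \<in> \<int>) \<and> s' = (B, C - {#c#})) \<or>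
         (\<exists>l. x $ l \<notin> \<int> \<and>
            s' = (B(l := c - (round_near (x $ l) *s B l +
                               (\<Sum>j\<in>UNIV - {l}. \<lfloor>x $ j\<rfloor> *s B j))),
                  (C - {#c#}) + {#B l#})))))"

end

theory Submission
  imports Defs
begin

text \<open>Throughout the run, \<open>det B \<noteq> 0\<close> and the columns of \<open>B\<close> together with \<open>C\<close> generate
  \<open>\<L>(A)\<close> over \<open>\<int>\<close>. A column \<open>c\<close> with integral coordinates \<open>x\<close> already lies in \<open>\<L>(B)\<close> and
  can be dropped. Otherwise \<open>c\<close> is replaced by \<open>c - w\<close> with \<open>w \<in> \<L>(B)\<close>, which leaves the
  lattice unchanged, and by Cramer's rule the new determinant is \<open>(x\<^sub>l - \<lfloor>x\<^sub>l\<rceil>) det B\<close>, where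
  \<open>0 < |x\<^sub>l - \<lfloor>x\<^sub>l\<rceil>| \<le> 1/2\<close>. Hence \<open>(|det B|, |C|)\<close> decreases lexicographically and the
  algorithm terminates. Cramer's rule also makes \<open>x\<close> rational for every \<open>c\<close>, so the loop can
  only stop with \<open>C = \<emptyset>\<close>, and then \<open>\<L>(B) = \<L>(A)\<close>.\<close>

section \<open>Integer lattices as spans over \<open>\<int>\<close>\<close>

lemma rv_diff: "rv (u - v) = rv u - rv v"
  by (simp add: rv_def vec_eq_iff)

lemma rv_scale: "rv (k *s v) = real_of_int k *\<^sub>R rv v"
  by (simp add: rv_def vec_eq_iff)

lemma rv_sum: "rv (sum f S) = (\<Sum>x\<in>S. rv (f x))"
  by (induction S rule: infinite_finite_induct) (simp_all add: rv_def vec_eq_iff)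

lemma rv_inject: "rv u = rv v \<longleftrightarrow> u = v"
  by (simp add: rv_def vec_eq_iff)

interpretation int_vec: module "(*s) :: int \<Rightarrow> int ^ 'n \<Rightarrow> int ^ 'n"
  by unfold_locales (simp_all add: vec_eq_iff algebra_simps)

lemma (in module) span_image_eq_range_sum:
  assumes "finite I"
  shows "span (f ` I) = range (\<lambda>u. \<Sum>i\<in>I. scale (u i) (f i))"
proof (rule subset_antisym)
  let ?R = "range (\<lambda>u. \<Sum>i\<in>I. scale (u i) (f i))"
  have "subspace ?R"
  proof (rule subspaceI)
    show "0 \<in> ?R"
      by (rule range_eqI[of _ _ "\<lambda>_. 0"]) simp
    show "x + y \<in> ?R" if x: "x \<in> ?R" and y: "y \<in> ?R" for x y
    proof -
      obtain u v where "x = (\<Sum>i\<in>I. scale (u i) (f i))" and "y = (\<Sum>i\<in>I. scale (v i) (f i))"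
        using x y by blast
      then show ?thesis
        by (intro range_eqI[of _ _ "\<lambda>i. u i + v i"]) (simp add: scale_left_distrib sum.distrib)
    qed
    show "scale c x \<in> ?R" if "x \<in> ?R" for c x
      using that by (auto simp: scale_sum_right)
  qed
  moreover have "f i \<in> ?R" if "i \<in> I" for i
  proof (rule range_eqI[of _ _ "\<lambda>j. if j = i then 1 else 0"])
    have "(\<Sum>j\<in>I. scale (if j = i then 1 else 0) (f j)) = (\<Sum>j\<in>I. if j = i then f j else 0)"
      by (rule sum.cong) simp_all
    then show "f i = (\<Sum>j\<in>I. scale (if j = i then 1 else 0) (f j))"
      using assms that by simp
  qed
  ultimately show "span (f ` I) \<subseteq> ?R"
    by (intro span_minimal) auto
  show "?R \<subseteq> span (f ` I)"
    by (auto intro!: span_sum span_scale intro: span_base)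
qed

lemma lattice_cols_eq_span: "lattice_cols A n = int_vec.span (A ` {..<n})"
  by (auto simp: lattice_cols_def int_vec.span_image_eq_range_sum)

lemma lattice_basis_eq_span: "lattice_basis B = int_vec.span (range B)"
  by (auto simp: lattice_basis_def int_vec.span_image_eq_range_sum)

lemma integral_coordinates_in_span:
  assumes "\<And>j. x $ j \<in> \<int>" and "(\<Sum>j\<in>UNIV. x $ j *\<^sub>R rv (B j)) = rv c"
  shows "c \<in> int_vec.span (range B)"
proof -
  have "x $ j = real_of_int \<lfloor>x $ j\<rfloor>" for j
    using assms(1) by (metis Ints_cases floor_of_int)
  then have "rv c = rv (\<Sum>j\<in>UNIV. \<lfloor>x $ j\<rfloor> *s B j)"
    by (metis (no_types, lifting) assms(2) rv_scale rv_sum sum.cong)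
  then have "c = (\<Sum>j\<in>UNIV. \<lfloor>x $ j\<rfloor> *s B j)"
    by (simp add: rv_inject)
  then show ?thesis
    by (auto intro!: int_vec.span_sum int_vec.span_scale intro: int_vec.span_base)
qed

section \<open>Matrices given by their columns\<close>

definition col_matrix :: "('n \<Rightarrow> 'a ^ 'm) \<Rightarrow> 'a ^ 'n ^ 'm" where
  "col_matrix B = (\<chi> i j. B j $ i)"

lemma col_matrix_mult_vec:
  fixes B :: "'n::finite \<Rightarrow> 'a::comm_semiring_1 ^ 'm"
  shows "col_matrix B *v x = (\<Sum>j\<in>UNIV. x $ j *s B j)"
  by (simp add: vec_eq_iff col_matrix_def matrix_vector_mult_def mult.commute)

lemma det_col_matrix_rv: "det (col_matrix (\<lambda>j. rv (B j))) = real_of_int (det (col_matrix B))"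
  unfolding det_def col_matrix_def rv_def by simp

lemma det_col_matrix_update:
  fixes B :: "'n::finite \<Rightarrow> 'a::field ^ 'n"
  shows "det (col_matrix (B(l := \<Sum>j\<in>UNIV. y $ j *s B j))) = y $ l * det (col_matrix B)"
proof -
  have "col_matrix (B(l := \<Sum>j\<in>UNIV. y $ j *s B j))
      = (\<chi> i j. if j = l then (col_matrix B *v y) $ i else col_matrix B $ i $ j)"
    unfolding col_matrix_mult_vec by (simp add: col_matrix_def vec_eq_iff)
  then show ?thesis
    by (simp add: cramer_lemma)
qed

lemma det_col_matrix_nonzero:
  fixes g :: "'n::finite \<Rightarrow> real ^ 'n"
  assumes "inj g" and "independent (range g)"
  shows "det (col_matrix g) \<noteq> 0"
proof -
  have "columns (col_matrix g) = range g"
    by (auto simp: columns_def column_def col_matrix_def)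
  then have "rank (col_matrix g) = CARD('n)"
    using assms by (simp add: column_rank_def dim_eq_card_independent card_image)
  then show ?thesis
    by (simp add: det_eq_0_rank)
qed

lemma rational_coordinates_exist:
  fixes B :: "'d::finite \<Rightarrow> int ^ 'd"
  assumes "det (col_matrix B) \<noteq> 0"
  obtains x :: "real ^ 'd"
  where "\<And>j. x $ j \<in> \<rat>" and "(\<Sum>j\<in>UNIV. x $ j *\<^sub>R rv (B j)) = rv c"
proof -
  let ?M = "col_matrix (\<lambda>j. rv (B j))"
  have d: "det ?M \<noteq> 0"
    using assms by (simp add: det_col_matrix_rv)
  define x where "x = (\<chi> k. det (\<chi> i j. if j = k then rv c $ i else ?M $ i $ j) / det ?M)"
  have "?M *v x = rv c"
    using cramer[OF d] x_def by simp
  then have "(\<Sum>j\<in>UNIV. x $ j *\<^sub>R rv (B j)) = rv c"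
    by (simp add: col_matrix_mult_vec scalar_mult_eq_scaleR)
  moreover have "(\<chi> i j. if j = k then rv c $ i else ?M $ i $ j) = col_matrix (\<lambda>j. rv ((B(k := c)) j))"
    for k by (simp add: vec_eq_iff col_matrix_def)
  then have "x $ k \<in> \<rat>" for k
    by (simp add: x_def det_col_matrix_rv)
  ultimately show ?thesis
    using that by blast
qed

lemma round_near_error:
  assumes "y \<notin> \<int>"
  shows "y - real_of_int (round_near y) \<noteq> 0" and "\<bar>y - real_of_int (round_near y)\<bar> \<le> 1/2"
proof -
  show "y - real_of_int (round_near y) \<noteq> 0"
    using assms by (metis Ints_of_int eq_iff_diff_eq_0)
  show "\<bar>y - real_of_int (round_near y)\<bar> \<le> 1/2"
    unfolding round_near_def by linarith
qed

section \<open>The algorithm\<close>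

lemma set_mset_eq_insert_remove1: "c \<in># C \<Longrightarrow> set_mset C = insert c (set_mset (C - {#c#}))"
  by (metis insert_DiffM set_mset_add_mset_insert)

definition gea_invariant :: "(nat \<Rightarrow> int ^ 'd::finite) \<Rightarrow> nat \<Rightarrow> 'd gea_state \<Rightarrow> bool" where
  "gea_invariant A n s \<longleftrightarrow> det (col_matrix (fst s)) \<noteq> 0 \<and>
     int_vec.span (range (fst s) \<union> set_mset (snd s)) = int_vec.span (A ` {..<n})"

definition gea_order :: "('d::finite gea_state \<times> 'd gea_state) set" where
  "gea_order = measures [\<lambda>s. nat \<bar>det (col_matrix (fst s))\<bar>, \<lambda>s. size (snd s)]"

lemma wf_gea_order: "wf gea_order"
  unfolding gea_order_def by (rule wf_measures)

lemma gea_init_exists: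
  fixes A :: "nat \<Rightarrow> int ^ 'd::finite"
  assumes "full_rank A n"
  shows "\<exists>s. gea_init A n s"
proof -
  let ?S = "(\<lambda>i. rv (A i)) ` {..<n}"
  obtain Bs where Bs: "Bs \<subseteq> ?S" "independent Bs" "card Bs = dim ?S"
    by (meson basis_exists)
  have "finite Bs"
    using independent_bound Bs(2) by blast
  moreover have "card (UNIV :: 'd set) = card Bs"
    using Bs(3) assms unfolding full_rank_def by simp
  ultimately obtain g where "bij_betw g (UNIV :: 'd set) Bs"
    by (metis finite_same_card_bij finite_class.finite_UNIV)
  then have g: "inj g" "range g = Bs"
    unfolding bij_betw_def by blast+
  have "g j \<in> ?S" for j
    using Bs(1) g(2) by blast
  then have "\<forall>j. \<exists>i. i < n \<and> rv (A i) = g j"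
    by (metis imageE lessThan_iff)
  then obtain \<sigma> where \<sigma>: "\<And>j. \<sigma> j < n" "\<And>j. rv (A (\<sigma> j)) = g j"
    by metis
  then have g_eq: "(\<lambda>j. rv (A (\<sigma> j))) = g"
    by auto
  have "inj \<sigma>"
  proof (rule injI)
    fix j k
    assume "\<sigma> j = \<sigma> k"
    then have "g j = g k"
      by (metis \<sigma>(2))
    then show "j = k"
      using g(1) by (simp add: inj_eq)
  qed
  moreover have "inj (\<lambda>j. rv (A (\<sigma> j)))" "independent (range (\<lambda>j. rv (A (\<sigma> j))))"
    unfolding g_eq g(2) by (fact g(1), fact Bs(2))
  ultimately have "gea_init A n ((\<lambda>j. A (\<sigma> j)), mset (map A (filter (\<lambda>i. i \<notin> range \<sigma>) [0..<n])))"
    unfolding gea_init_def by (intro exI[of _ \<sigma>]) (simp add: \<sigma>(1))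
  then show ?thesis
    by blast
qed

lemma gea_init_invariant:
  assumes "gea_init A n s"
  shows "gea_invariant A n s"
proof -
  obtain \<sigma> where \<sigma>: "\<forall>j. \<sigma> j < n" "inj (\<lambda>j. rv (A (\<sigma> j)))"
      "independent (range (\<lambda>j. rv (A (\<sigma> j))))"
    and s: "s = ((\<lambda>j. A (\<sigma> j)), mset (map A (filter (\<lambda>i. i \<notin> range \<sigma>) [0..<n])))"
    using assms unfolding gea_init_def by blast
  have "det (col_matrix (\<lambda>j. A (\<sigma> j))) \<noteq> 0"
    using det_col_matrix_nonzero[OF \<sigma>(2,3)] by (simp add: det_col_matrix_rv)
  moreover have "range (\<lambda>j. A (\<sigma> j)) \<union> set (map A (filter (\<lambda>i. i \<notin> range \<sigma>) [0..<n])) = A ` {..<n}"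
    using \<sigma>(1) by auto
  ultimately show ?thesis
    unfolding gea_invariant_def s by simp
qed

lemma gea_removal_invariant:
  assumes "gea_invariant A n (B, C)" and "c \<in># C" and "c \<in> int_vec.span (range B)"
  shows "gea_invariant A n (B, C - {#c#})"
proof -
  let ?S = "range B \<union> set_mset (C - {#c#})"
  have split: "range B \<union> set_mset C = insert c ?S"
    using set_mset_eq_insert_remove1[OF assms(2)] by auto
  have "c \<in> int_vec.span ?S"
    using assms(3) int_vec.span_mono[of "range B" ?S] by blast
  then have "int_vec.span (insert c ?S) = int_vec.span ?S"
    unfolding int_vec.span_eq by (auto intro: int_vec.span_base)
  then have "int_vec.span (range B \<union> set_mset C) = int_vec.span ?S"
    by (simp only: split)
  then show ?thesis
    using assms(1) by (simp add: gea_invariant_def)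
qed

lemma det_exchange_column:
  assumes "(\<Sum>j\<in>UNIV. x $ j *\<^sub>R rv (B j)) = rv c"
  shows "real_of_int (det (col_matrix (B(l := c - (\<Sum>j\<in>UNIV. a j *s B j)))))
       = (x $ l - real_of_int (a l)) * real_of_int (det (col_matrix B))"
proof -
  define y where "y = (\<chi> j. x $ j - real_of_int (a j))"
  have "rv (c - (\<Sum>j\<in>UNIV. a j *s B j))
      = (\<Sum>j\<in>UNIV. x $ j *\<^sub>R rv (B j)) - (\<Sum>j\<in>UNIV. real_of_int (a j) *\<^sub>R rv (B j))"
    unfolding assms rv_diff rv_sum rv_scale ..
  also have "\<dots> = (\<Sum>j\<in>UNIV. y $ j *s rv (B j))"
    by (simp add: y_def scalar_mult_eq_scaleR scaleR_diff_left sum_subtractf)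
  finally have "(\<lambda>j. rv ((B(l := c - (\<Sum>j\<in>UNIV. a j *s B j))) j))
      = (\<lambda>j. rv (B j))(l := \<Sum>j\<in>UNIV. y $ j *s rv (B j))"
    by (simp add: fun_eq_iff)
  then have "det (col_matrix (\<lambda>j. rv ((B(l := c - (\<Sum>j\<in>UNIV. a j *s B j))) j)))
      = y $ l * det (col_matrix (\<lambda>j. rv (B j)))"
    by (simp only: det_col_matrix_update)
  then show ?thesis
    unfolding det_col_matrix_rv y_def vec_lambda_beta .
qed

lemma span_exchange_column:
  assumes c: "c \<in># C"
    and w: "w \<in> int_vec.span (range B)"
  shows "int_vec.span (range (B(l := c - w)) \<union> set_mset (C - {#c#} + {#B l#}))
       = int_vec.span (range B \<union> set_mset C)"
proof -
  let ?S = "range B \<union> set_mset (C - {#c#})"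
  have "range (B(l := c - w)) \<union> {B l} = insert (c - w) (range B)"
    by (auto simp: fun_upd_image)
  then have new: "range (B(l := c - w)) \<union> set_mset (C - {#c#} + {#B l#}) = insert (c - w) ?S"
    by auto
  have old: "range B \<union> set_mset C = insert c ?S"
    using set_mset_eq_insert_remove1[OF c] by auto
  have "(c - w) - c \<in> int_vec.span ?S"
    using w int_vec.span_mono[of "range B" ?S] by (auto intro: int_vec.span_neg)
  then show ?thesis
    unfolding new old by (rule int_vec.eq_span_insert_eq)
qed

lemma det_exchange_column_decreases:
  assumes "(\<Sum>j\<in>UNIV. x $ j *\<^sub>R rv (B j)) = rv c" and "x $ l \<notin> \<int>"
    and "a l = round_near (x $ l)" and "det (col_matrix B) \<noteq> 0"
  defines "B' \<equiv> B(l := c - (\<Sum>j\<in>UNIV. a j *s B j))"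
  shows "det (col_matrix B') \<noteq> 0" and "\<bar>det (col_matrix B')\<bar> < \<bar>det (col_matrix B)\<bar>"
proof -
  let ?e = "x $ l - real_of_int (round_near (x $ l))"
  have det: "real_of_int (det (col_matrix B')) = ?e * real_of_int (det (col_matrix B))"
    unfolding B'_def using det_exchange_column[OF assms(1)] assms(3) by simp
  then show "det (col_matrix B') \<noteq> 0"
    using round_near_error(1)[OF assms(2)] assms(4) by auto
  have "\<bar>real_of_int (det (col_matrix B'))\<bar> \<le> 1/2 * \<bar>real_of_int (det (col_matrix B))\<bar>"
    unfolding det abs_mult by (rule mult_right_mono[OF round_near_error(2)[OF assms(2)]]) simp
  then show "\<bar>det (col_matrix B')\<bar> < \<bar>det (col_matrix B)\<bar>"
    using assms(4) by linarith
qed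

lemma gea_step_invariant_and_decrease:
  assumes inv: "gea_invariant A n s" and step: "gea_step s s'"
  shows "gea_invariant A n s' \<and> (s', s) \<in> gea_order"
proof -
  obtain B C where s: "s = (B, C)"
    by fastforce
  have det: "det (col_matrix B) \<noteq> 0"
    using inv by (simp add: gea_invariant_def s)
  obtain c x where c: "c \<in># C" and eq: "(\<Sum>j\<in>UNIV. x $ j *\<^sub>R rv (B j)) = rv c"
    and cases: "((\<forall>j. x $ j \<in> \<int>) \<and> s' = (B, C - {#c#})) \<or>
         (\<exists>l. x $ l \<notin> \<int> \<and> s' = (B(l := c - (round_near (x $ l) *s B l +
               (\<Sum>j\<in>UNIV - {l}. \<lfloor>x $ j\<rfloor> *s B j))), C - {#c#} + {#B l#}))"
    using step unfolding gea_step_def s by auto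
  from cases show ?thesis
  proof (elim disjE exE conjE)
    assume "\<forall>j. x $ j \<in> \<int>" and s': "s' = (B, C - {#c#})"
    then have "gea_invariant A n s'"
      using gea_removal_invariant[OF inv[unfolded s] c] integral_coordinates_in_span[OF _ eq] by auto
    moreover have "size (C - {#c#}) < size C"
      using c by (rule size_Diff1_less)
    ultimately show ?thesis
      by (simp add: gea_order_def s s')
  next
    fix l
    assume xl: "x $ l \<notin> \<int>" and s': "s' = (B(l := c - (round_near (x $ l) *s B l +
               (\<Sum>j\<in>UNIV - {l}. \<lfloor>x $ j\<rfloor> *s B j))), C - {#c#} + {#B l#})"
    define a where "a j = (if j = l then round_near (x $ l) else \<lfloor>x $ j\<rfloor>)" for j
    define w where "w = (\<Sum>j\<in>UNIV. a j *s B j)"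
    have "round_near (x $ l) *s B l + (\<Sum>j\<in>UNIV - {l}. \<lfloor>x $ j\<rfloor> *s B j) = w"
      using sum.remove[of UNIV l "\<lambda>j. a j *s B j"] by (simp add: w_def a_def)
    then have s': "s' = (B(l := c - w), C - {#c#} + {#B l#})"
      using s' by simp
    have "w \<in> int_vec.span (range B)"
      unfolding w_def by (auto intro!: int_vec.span_sum int_vec.span_scale intro: int_vec.span_base)
    then have "int_vec.span (range (B(l := c - w)) \<union> set_mset (C - {#c#} + {#B l#}))
        = int_vec.span (range B \<union> set_mset C)"
      by (rule span_exchange_column[OF c])
    moreover have "det (col_matrix (B(l := c - w))) \<noteq> 0"
      and "\<bar>det (col_matrix (B(l := c - w)))\<bar> < \<bar>det (col_matrix B)\<bar>"
      using det_exchange_column_decreases[OF eq xl _ det, of a] by (simp_all add: a_def w_def)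
    ultimately show ?thesis
      using inv by (simp add: gea_invariant_def gea_order_def s s')
  qed
qed

lemma gea_step_exists:
  assumes "gea_invariant A n s" and "snd s \<noteq> {#}"
  shows "\<exists>s'. gea_step s s'"
proof -
  obtain B C where s: "s = (B, C)"
    by fastforce
  obtain c where c: "c \<in># C"
    using assms(2) by (auto simp: s)
  obtain x where q: "\<And>j. x $ j \<in> \<rat>" and eq: "(\<Sum>j\<in>UNIV. x $ j *\<^sub>R rv (B j)) = rv c"
    using rational_coordinates_exist assms(1) by (metis gea_invariant_def fst_conv s)
  show ?thesis
  proof (cases "\<forall>j. x $ j \<in> \<int>")
    case True
    then have "gea_step s (B, C - {#c#})"
      unfolding gea_step_def s using c q eq by auto
    then show ?thesis ..
  next
    case False
    then obtain l where "x $ l \<notin> \<int>"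
      by blast
    then have "gea_step s (B(l := c - (round_near (x $ l) *s B l +
        (\<Sum>j\<in>UNIV - {l}. \<lfloor>x $ j\<rfloor> *s B j))), C - {#c#} + {#B l#})"
      unfolding gea_step_def s using c q eq by auto
    then show ?thesis ..
  qed
qed

lemma gea_reachable_invariant:
  assumes "gea_init A n s0" and "gea_step\<^sup>*\<^sup>* s0 s"
  shows "gea_invariant A n s"
  using assms(2)
proof (induction rule: rtranclp_induct)
  case base
  show ?case
    using assms(1) by (rule gea_init_invariant)
next
  case (step s s')
  then show ?case
    using gea_step_invariant_and_decrease by blast
qed

lemma gea_no_infinite_run:
  "\<not> (\<exists>f :: nat \<Rightarrow> 'd::finite gea_state. gea_init A n (f 0) \<and> (\<forall>k. gea_step (f k) (f (Suc k))))"
proof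
  assume "\<exists>f :: nat \<Rightarrow> 'd gea_state. gea_init A n (f 0) \<and> (\<forall>k. gea_step (f k) (f (Suc k)))"
  then obtain f :: "nat \<Rightarrow> 'd gea_state"
    where init: "gea_init A n (f 0)" and steps: "\<And>k. gea_step (f k) (f (Suc k))"
    by blast
  have "gea_invariant A n (f k)" for k
    by (induction k) (use init gea_init_invariant gea_step_invariant_and_decrease steps in blast)+
  then have "(f (Suc k), f k) \<in> gea_order" for k
    using gea_step_invariant_and_decrease steps by blast
  then show False
    using wf_gea_order unfolding wf_iff_no_infinite_down_chain by blast
qed

lemma gea_invariant_imp_basis:
  assumes "gea_invariant A n s" and "snd s = {#}"
  shows "lattice_basis (fst s) = lattice_cols A n"
  using assms by (simp add: gea_invariant_def lattice_basis_eq_span lattice_cols_eq_span)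

theorem theorem1:
  fixes A :: "nat \<Rightarrow> int ^ 'd::finite" and n :: nat
  assumes "full_rank A n"
  shows "(\<exists>s. gea_init A n s)
    \<and> \<not> (\<exists>f :: nat \<Rightarrow> 'd gea_state. gea_init A n (f 0) \<and> (\<forall>k. gea_step (f k) (f (Suc k))))
    \<and> (\<forall>s0 s. gea_init A n s0 \<and> gea_step\<^sup>*\<^sup>* s0 s \<and> \<not> (\<exists>s'. gea_step s s') \<longrightarrow>
          snd s = {#} \<and> lattice_basis (fst s) = lattice_cols A n)"
  using gea_init_exists[OF assms] gea_no_infinite_run gea_reachable_invariant
    gea_step_exists gea_invariant_imp_basis by blast

end
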